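(* Let $I=(z_1^3-z_3z_2,\,z_2^2)\subset\mathcal{O}_3$. Then $\mathbf{T}_2(I)=3$ and $\beta_2(I)=4$. More precisely, for $a,b\in\mathbb{C}$ one has $\mathbf{T}_1(I,az_1+bz_2+z_3)=4$ if $a\neq 0$ and $=3$ if $a=0$, while $\mathbf{T}_1(I,az_1+bz_2)=\infty$.
   Context: $\mathcal{O}_n$ denotes the local ring of germs at $0\in\mathbb{C}^n$ of holomorphic functions. $\Gamma$ denotes the set of non-constant germs of holomorphic maps $z\colon(\mathbb{C},0)\to(\mathbb{C}^n,0)$; $v(z)$ is the order of vanishing of $z$ at $0$ and $v(g\circ z)$ the order of vanishing of the one-variable germ $g\circ z$ ($v(0)=\infty$). For an ideal $I\subset\mathcal{O}_n$, $\mathbf{T}_1(I)=\sup_{z\in\Gamma}\inf_{g\in I}\frac{v(g\circ z)}{v(z)}$, and for $q\in\{1,\dots,n\}$, $\mathbf{T}_q(I)=\inf_{\{w_1,\dots,w_{q-1}\}}\mathbf{T}_1(I,w_1,\dots,w_{q-1})$ over all linear functions $w_1,\dots,w_{q-1}$, where $(I,w_1,\dots,w_{q-1})$ is the ideal generated by $I$ and the $w_j$. The generic value $\beta_q(I)$ is the unique $\beta\in\mathbb{R}\cup\{\infty\}$ such that there is a non-empty Zariski open subset $W$ of the Grassmannian $G^{n-q+1}$ of $(n-q+1)$-dimensional linear subspaces of $\mathbb{C}^n$ with $\mathbf{T}_1(I,w_1,\dots,w_{q-1})=\beta$ whenever $\{w_1=\dots=w_{q-1}=0\}\in W$. *)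

theory Defs
  imports "HOL-Analysis.Analysis" "HOL-Library.Numeral_Type"
begin

definition cholo_on :: "(complex^'n) set \<Rightarrow> (complex^'n \<Rightarrow> complex) \<Rightarrow> bool" where
  "cholo_on U f \<longleftrightarrow>
     (\<forall>x\<in>U. \<exists>L. (f has_derivative L) (at x) \<and> (\<forall>c v. L (c *s v) = c * L v))"

text \<open>A function representing an element of O_n (holomorphic near 0).\<close>
definition germ_holo :: "(complex^'n \<Rightarrow> complex) \<Rightarrow> bool" where
  "germ_holo f \<longleftrightarrow> (\<exists>U. open U \<and> 0 \<in> U \<and> cholo_on U f)"

text \<open>Ideal of O_n generated by S (germs: closed under agreement near 0).\<close>
definition gen_ideal :: "(complex^'n \<Rightarrow> complex) set \<Rightarrow> (complex^'n \<Rightarrow> complex) set" where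
  "gen_ideal S = {g. germ_holo g \<and>
     (\<exists>F h. finite F \<and> F \<subseteq> S \<and> (\<forall>f\<in>F. germ_holo (h f)) \<and>
        (\<forall>\<^sub>F x in nhds 0. g x = (\<Sum>f\<in>F. h f x * f x)))}"

definition ord0 :: "(complex \<Rightarrow> complex) \<Rightarrow> enat" where
  "ord0 f = (if \<exists>k. (deriv ^^ k) f 0 \<noteq> 0
             then enat (LEAST k. (deriv ^^ k) f 0 \<noteq> 0) else \<infinity>)"

definition curves :: "(complex \<Rightarrow> complex^'n) set" where
  "curves = {z. (\<exists>U. open U \<and> 0 \<in> U \<and> (\<forall>i. (\<lambda>t. z t $ i) holomorphic_on U))
               \<and> z 0 = 0 \<and> \<not> (\<forall>\<^sub>F t in nhds 0. z t = 0)}"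

definition curve_ord :: "(complex \<Rightarrow> complex^'n) \<Rightarrow> enat" where
  "curve_ord z = (INF i. ord0 (\<lambda>t. z t $ i))"

definition T1 :: "(complex^'n \<Rightarrow> complex) set \<Rightarrow> ereal" where
  "T1 I = (SUP z\<in>curves. INF g\<in>I.
             ereal_of_enat (ord0 (g \<circ> z)) / ereal_of_enat (curve_ord z))"

definition linform :: "complex^'n \<Rightarrow> complex^'n \<Rightarrow> complex" where
  "linform c = (\<lambda>x. \<Sum>i\<in>UNIV. c $ i * x $ i)"

definition Tq :: "nat \<Rightarrow> (complex^'n \<Rightarrow> complex) set \<Rightarrow> ereal" where
  "Tq q I = (INF ws\<in>{ws :: (complex^'n) list. length ws = q - 1}.
               T1 (gen_ideal (I \<union> linform ` set ws)))"

definition hom_poly :: "(complex^'n \<Rightarrow> complex) \<Rightarrow> bool" where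
  "hom_poly p \<longleftrightarrow> (\<exists>(d::nat) (F::('n \<Rightarrow> nat) set) c. finite F \<and>
      (\<forall>\<alpha>\<in>F. (\<Sum>i\<in>UNIV. \<alpha> i) = d) \<and>
      p = (\<lambda>x. \<Sum>\<alpha>\<in>F. c \<alpha> * (\<Prod>i\<in>UNIV. x $ i ^ \<alpha> i)))"

text \<open>Zariski open subsets of G^{n-1} (hyperplanes), identified with the dual
  projective space: represented by the cone of nonzero coefficient vectors c
  of the hyperplanes {linform c = 0} lying in the open set.\<close>
definition zariski_open_hyp :: "(complex^'n) set \<Rightarrow> bool" where
  "zariski_open_hyp W \<longleftrightarrow>
     (\<exists>P. (\<forall>p\<in>P. hom_poly p) \<and> W = {c. c \<noteq> 0 \<and> (\<exists>p\<in>P. p c \<noteq> 0)})"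

text \<open>Generic value beta_2 (q = 2: subspaces of dimension n-1).\<close>
definition beta2 :: "(complex^'n \<Rightarrow> complex) set \<Rightarrow> ereal" where
  "beta2 I = (THE \<beta>. \<exists>W. zariski_open_hyp W \<and> W \<noteq> {} \<and>
                 (\<forall>c\<in>W. T1 (gen_ideal (I \<union> {linform c})) = \<beta>))"

end

theory Submission
  imports Defs "HOL-Complex_Analysis.Complex_Singularities"
begin

text \<open>Let \<open>\<ell> = c\<^sub>1z\<^sub>1 + c\<^sub>2z\<^sub>2 + c\<^sub>3z\<^sub>3\<close>. If \<open>c\<^sub>3 = 0\<close>, the \<open>z\<^sub>3\<close>-axis lies in \<open>{\<ell> = 0}\<close> and on the zero set
  of the ideal, so \<open>T\<^sub>1 = \<infinity>\<close>. If \<open>c\<^sub>3 \<noteq> 0\<close>, let \<open>z\<close> be a curve of order \<open>m\<close>. If \<open>z\<^sub>2\<^sup>2\<close> has order at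
  most \<open>4m\<close> we are done; otherwise \<open>ord z\<^sub>2 > 2m\<close>, and either \<open>ord z\<^sub>1 = m\<close>, when
  \<open>z\<^sub>1\<^sup>3 - z\<^sub>3z\<^sub>2\<close> has order \<open>3m\<close>, or \<open>ord z\<^sub>3 = m\<close>, when \<open>\<ell>\<close> has order \<open>m\<close>. So \<open>T\<^sub>1 \<le> 4\<close>, and
  \<open>T\<^sub>1 \<le> 3\<close> when \<open>c\<^sub>1 = 0\<close>, using \<open>c\<^sub>3z\<^sub>1\<^sup>3 + c\<^sub>1z\<^sub>1z\<^sub>2\<close> (which lies in the ideal) instead of \<open>z\<^sub>1\<^sup>3 - z\<^sub>3z\<^sub>2\<close>.
  The curves \<open>(t, 0, -c\<^sub>1t/c\<^sub>3)\<close> and, for \<open>c\<^sub>1 \<noteq> 0\<close>, \<open>(t, -st\<^sup>2, \<dots>)\<close> with \<open>s = c\<^sub>3/c\<^sub>1\<close>, lying in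
  \<open>{\<ell> = 0}\<close>, show these bounds are attained. Finally, every nonempty Zariski open set of
  hyperplanes contains one with \<open>c\<^sub>1c\<^sub>3 \<noteq> 0\<close>, which makes the generic value \<open>4\<close>.\<close>

section \<open>Orders of one-variable germs\<close>

definition germ_holo1 :: "(complex \<Rightarrow> complex) \<Rightarrow> bool" where
  "germ_holo1 f \<longleftrightarrow> (\<exists>U. open U \<and> 0 \<in> U \<and> f holomorphic_on U)"

lemma germ_holo1_add: "germ_holo1 f \<Longrightarrow> germ_holo1 g \<Longrightarrow> germ_holo1 (\<lambda>t. f t + g t)"
  unfolding germ_holo1_def
proof (elim exE conjE)
  fix U V assume "open U" "0 \<in> U" "f holomorphic_on U" "open V" "0 \<in> V" "g holomorphic_on V"
  then show "\<exists>W. open W \<and> 0 \<in> W \<and> (\<lambda>t. f t + g t) holomorphic_on W"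
    by (intro exI[of _ "U \<inter> V"]) (auto intro!: holomorphic_intros intro: holomorphic_on_subset)
qed

lemma germ_holo1_mult: "germ_holo1 f \<Longrightarrow> germ_holo1 g \<Longrightarrow> germ_holo1 (\<lambda>t. f t * g t)"
  unfolding germ_holo1_def
proof (elim exE conjE)
  fix U V assume "open U" "0 \<in> U" "f holomorphic_on U" "open V" "0 \<in> V" "g holomorphic_on V"
  then show "\<exists>W. open W \<and> 0 \<in> W \<and> (\<lambda>t. f t * g t) holomorphic_on W"
    by (intro exI[of _ "U \<inter> V"]) (auto intro!: holomorphic_intros intro: holomorphic_on_subset)
qed

lemma germ_holo1_const [simp]: "germ_holo1 (\<lambda>t. c)"
  unfolding germ_holo1_def by (rule exI[of _ UNIV]) auto

lemma germ_holo1_ident [simp]: "germ_holo1 (\<lambda>t. t)"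
  unfolding germ_holo1_def by (rule exI[of _ UNIV]) auto

lemma germ_holo1_power: "germ_holo1 f \<Longrightarrow> germ_holo1 (\<lambda>t. f t ^ n)"
  by (induction n) (auto intro: germ_holo1_mult)

lemma germ_holo1_sum:
  "finite F \<Longrightarrow> (\<And>i. i \<in> F \<Longrightarrow> germ_holo1 (f i)) \<Longrightarrow> germ_holo1 (\<lambda>t. \<Sum>i\<in>F. f i t)"
  by (induction F rule: finite_induct) (auto intro: germ_holo1_add)

lemma ord0_cong: "eventually (\<lambda>t. f t = g t) (nhds 0) \<Longrightarrow> ord0 f = ord0 g"
  unfolding ord0_def by (simp add: higher_deriv_cong_ev)

lemma ord0_eventually_zero: "eventually (\<lambda>t. f t = 0) (nhds 0) \<Longrightarrow> ord0 f = \<infinity>"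
  using ord0_cong[of f "\<lambda>t. 0"] by (simp add: ord0_def)

lemma higher_deriv_monomial_at_0:
  "(deriv ^^ i) (\<lambda>w::complex. w ^ n) 0 = (if i = n then fact n else 0)"
proof -
  have "(deriv ^^ i) (\<lambda>w::complex. w ^ n) 0 = pochhammer (of_nat (Suc n - i)) i * 0 ^ (n - i)"
    using higher_deriv_power[of i 0 n 0] by simp
  also have "\<dots> = (if i = n then fact n else 0)"
    by (cases "i < n"; cases "i = n") (auto simp: pochhammer_fact pochhammer_0_left)
  finally show ?thesis .
qed

lemma ord0_monomial_mult:
  assumes "germ_holo1 h" "h 0 \<noteq> 0"
  shows "ord0 (\<lambda>t. t ^ n * h t) = enat n"
proof -
  obtain U where U: "open U" "0 \<in> U" "h holomorphic_on U"
    using assms(1) unfolding germ_holo1_def by blast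
  have D: "(deriv ^^ k) (\<lambda>t. t ^ n * h t) 0 =
      (\<Sum>i = 0..k. of_nat (k choose i) * (if i = n then fact n else 0) * (deriv ^^ (k - i)) h 0)" for k
    using higher_deriv_mult[OF _ U(3,1,2), of "\<lambda>w. w ^ n" k]
    by (simp add: higher_deriv_monomial_at_0 holomorphic_on_power)
  have below: "(deriv ^^ k) (\<lambda>t. t ^ n * h t) 0 = 0" if "k < n" for k
    unfolding D using that by (intro sum.neutral) auto
  have at: "(deriv ^^ n) (\<lambda>t. t ^ n * h t) 0 = fact n * h 0"
    unfolding D by (subst sum.remove[of _ n]) auto
  then have nonzero: "(deriv ^^ n) (\<lambda>t. t ^ n * h t) 0 \<noteq> 0" using assms(2) by simp
  have "(LEAST k. (deriv ^^ k) (\<lambda>t. t ^ n * h t) 0 \<noteq> 0) = n"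
    by (rule Least_equality) (use nonzero below not_less in auto)
  then show ?thesis unfolding ord0_def using nonzero by auto
qed

lemma germ_holo1_factor:
  assumes "germ_holo1 f" "\<not> eventually (\<lambda>t. f t = 0) (nhds 0)"
  obtains n h where "germ_holo1 h" "h 0 \<noteq> 0" "eventually (\<lambda>t. f t = t ^ n * h t) (nhds 0)"
proof (cases "f 0 = 0")
  case False
  then show ?thesis using that[of f 0] assms(1) by simp
next
  case True
  obtain U where U: "open U" "0 \<in> U" "f holomorphic_on U"
    using assms(1) unfolding germ_holo1_def by blast
  obtain r where r: "r > 0" "ball 0 r \<subseteq> U" using U openE by blast
  have "\<not> f constant_on ball 0 r"
  proof
    assume "f constant_on ball 0 r"
    then have "\<forall>x\<in>ball 0 r. f x = 0" using True r(1) by (auto simp: constant_on_def)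
    then have "eventually (\<lambda>t. f t = 0) (nhds 0)"
      using r(1) unfolding eventually_nhds by (intro exI[of _ "ball 0 r"]) auto
    then show False using assms(2) by simp
  qed
  then obtain g r' n where g: "0 < r'" "g holomorphic_on ball 0 r'"
      "\<And>w. w \<in> ball 0 r' \<Longrightarrow> f w = (w - 0) ^ n * g w \<and> g w \<noteq> 0"
    using holomorphic_factor_zero_nonconstant[OF holomorphic_on_subset[OF U(3) r(2)]
        open_ball connected_ball _ True] r(1)
    by (metis centre_in_ball)
  show ?thesis
  proof (rule that)
    show "germ_holo1 g" unfolding germ_holo1_def using g(1,2) by (intro exI[of _ "ball 0 r'"]) auto
    show "g 0 \<noteq> 0" using g by auto
    show "eventually (\<lambda>t. f t = t ^ n * g t) (nhds 0)"
      unfolding eventually_nhds using g by (intro exI[of _ "ball 0 r'"]) auto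
  qed
qed

lemma ord0_cases:
  assumes "germ_holo1 f"
  obtains "eventually (\<lambda>t. f t = 0) (nhds 0)" "ord0 f = \<infinity>"
  | n h where "germ_holo1 h" "h 0 \<noteq> 0" "eventually (\<lambda>t. f t = t ^ n * h t) (nhds 0)"
      "ord0 f = enat n"
proof (cases "eventually (\<lambda>t. f t = 0) (nhds 0)")
  case True
  then show ?thesis using that(1) ord0_eventually_zero[OF True] by simp
next
  case False
  then obtain n h where h: "germ_holo1 h" "h 0 \<noteq> 0" "eventually (\<lambda>t. f t = t ^ n * h t) (nhds 0)"
    using germ_holo1_factor[OF assms] by blast
  then show ?thesis using that(2) ord0_cong[OF h(3)] ord0_monomial_mult[OF h(1,2)] by simp
qed

lemma ord0_ge_if_divisible:
  assumes "germ_holo1 q" "eventually (\<lambda>t. f t = t ^ n * q t) (nhds 0)"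
  shows "enat n \<le> ord0 f"
proof (cases rule: ord0_cases[OF assms(1)])
  case 1
  have "eventually (\<lambda>t. f t = 0) (nhds 0)" using 1(1) assms(2) by eventually_elim auto
  then show ?thesis using ord0_eventually_zero by simp
next
  case (2 k h)
  have "eventually (\<lambda>t. f t = t ^ (n + k) * h t) (nhds 0)"
    using 2(3) assms(2) by eventually_elim (simp add: power_add)
  then have "ord0 f = enat (n + k)" using ord0_cong ord0_monomial_mult[OF 2(1,2)] by metis
  then show ?thesis by simp
qed

lemma ord0_mult:
  assumes "germ_holo1 f" "germ_holo1 g"
  shows "ord0 (\<lambda>t. f t * g t) = ord0 f + ord0 g"
proof (cases rule: ord0_cases[OF assms(1)])
  case 1
  from 1(1) have "eventually (\<lambda>t. f t * g t = 0) (nhds 0)" by eventually_elim simp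
  then show ?thesis using 1(2) ord0_eventually_zero by simp
next
  case f: (2 n h)
  show ?thesis
  proof (cases rule: ord0_cases[OF assms(2)])
    case 1
    from 1(1) have "eventually (\<lambda>t. f t * g t = 0) (nhds 0)" by eventually_elim simp
    then show ?thesis using 1(2) ord0_eventually_zero by simp
  next
    case g: (2 m k)
    have "eventually (\<lambda>t. f t * g t = t ^ (n + m) * (h t * k t)) (nhds 0)"
      using f(3) g(3) by eventually_elim (simp add: power_add algebra_simps)
    then have "ord0 (\<lambda>t. f t * g t) = enat (n + m)"
      using ord0_cong ord0_monomial_mult[OF germ_holo1_mult[OF f(1) g(1)]] f(2) g(2) by simp
    then show ?thesis using f(4) g(4) by simp
  qed
qed

lemma ord0_add_ge:
  assumes "germ_holo1 f" "germ_holo1 g"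
  shows "min (ord0 f) (ord0 g) \<le> ord0 (\<lambda>t. f t + g t)"
proof (cases rule: ord0_cases[OF assms(1)])
  case 1
  from 1(1) have "eventually (\<lambda>t. f t + g t = g t) (nhds 0)" by eventually_elim auto
  then have "ord0 (\<lambda>t. f t + g t) = ord0 g" by (rule ord0_cong)
  then show ?thesis by simp
next
  case f: (2 n h)
  show ?thesis
  proof (cases rule: ord0_cases[OF assms(2)])
    case 1
    from 1(1) have "eventually (\<lambda>t. f t + g t = f t) (nhds 0)" by eventually_elim auto
    then have "ord0 (\<lambda>t. f t + g t) = ord0 f" by (rule ord0_cong)
    then show ?thesis by simp
  next
    case g: (2 m k)
    define p where "p = min n m"
    have "eventually (\<lambda>t. f t + g t = t ^ p * (t ^ (n - p) * h t + t ^ (m - p) * k t)) (nhds 0)"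
      using f(3) g(3)
    proof eventually_elim
      case (elim t)
      have "t ^ n = t ^ p * t ^ (n - p)" "t ^ m = t ^ p * t ^ (m - p)"
        unfolding p_def by (simp_all flip: power_add)
      then show ?case using elim by (simp add: algebra_simps)
    qed
    then have "enat p \<le> ord0 (\<lambda>t. f t + g t)"
      by (rule ord0_ge_if_divisible[rotated])
         (use f(1) g(1) in \<open>auto intro!: germ_holo1_add germ_holo1_mult germ_holo1_power\<close>)
    then show ?thesis using f(4) g(4) by (simp add: p_def)
  qed
qed

lemma ord0_add_eq_left:
  assumes "germ_holo1 f" "germ_holo1 g" "ord0 f < ord0 g"
  shows "ord0 (\<lambda>t. f t + g t) = ord0 f"
proof (cases rule: ord0_cases[OF assms(1)])
  case 1
  then show ?thesis using assms(3) by simp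
next
  case f: (2 n h)
  show ?thesis
  proof (cases rule: ord0_cases[OF assms(2)])
    case 1
    from 1(1) have "eventually (\<lambda>t. f t + g t = f t) (nhds 0)" by eventually_elim auto
    then have "ord0 (\<lambda>t. f t + g t) = ord0 f" by (rule ord0_cong)
    then show ?thesis by simp
  next
    case g: (2 m k)
    have nm: "n < m" using assms(3) f(4) g(4) by simp
    have "eventually (\<lambda>t. f t + g t = t ^ n * (h t + t ^ (m - n) * k t)) (nhds 0)"
      using f(3) g(3)
    proof eventually_elim
      case (elim t)
      have "t ^ m = t ^ n * t ^ (m - n)" using nm by (simp flip: power_add)
      then show ?case using elim by (simp add: algebra_simps)
    qed
    moreover have "germ_holo1 (\<lambda>t. h t + t ^ (m - n) * k t)"
      using f(1) g(1) by (intro germ_holo1_add germ_holo1_mult germ_holo1_power) auto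
    moreover have "h 0 + 0 ^ (m - n) * k 0 \<noteq> 0" using nm f(2) by (simp add: zero_power)
    ultimately have "ord0 (\<lambda>t. f t + g t) = enat n" using ord0_cong ord0_monomial_mult by metis
    then show ?thesis using f(4) by simp
  qed
qed

lemma ord0_const: "c \<noteq> 0 \<Longrightarrow> ord0 (\<lambda>t. c) = 0"
  using ord0_monomial_mult[of "\<lambda>t. c" 0] by (simp add: zero_enat_def)

lemma ord0_ident: "ord0 (\<lambda>t. t) = 1"
  using ord0_monomial_mult[of "\<lambda>t. 1" 1] by (simp add: one_enat_def)

lemma ord0_cmult: "germ_holo1 f \<Longrightarrow> c \<noteq> 0 \<Longrightarrow> ord0 (\<lambda>t. c * f t) = ord0 f"
  using ord0_mult[of "\<lambda>t. c" f] ord0_const by simp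

lemma ord0_cmult_ge: "germ_holo1 f \<Longrightarrow> ord0 f \<le> ord0 (\<lambda>t. c * f t)"
proof (cases "c = 0")
  case True
  then show ?thesis using ord0_eventually_zero[of "\<lambda>t. c * f t"] by simp
qed (simp add: ord0_cmult)

lemma ord0_power: "germ_holo1 f \<Longrightarrow> ord0 (\<lambda>t. f t ^ n) = of_nat n * ord0 f"
proof (induction n)
  case 0
  then show ?case using ord0_const[of 1] by simp
next
  case (Suc n)
  then have "ord0 (\<lambda>t. f t * f t ^ n) = ord0 f + ord0 (\<lambda>t. f t ^ n)"
    by (intro ord0_mult germ_holo1_power)
  then show ?case using Suc by (simp add: algebra_simps)
qed


section \<open>Holomorphic germs in several variables and their ideals\<close>

definition cdifferentiable_at :: "(complex^'n \<Rightarrow> complex) \<Rightarrow> complex^'n \<Rightarrow> bool" where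
  "cdifferentiable_at f x \<longleftrightarrow> (\<exists>L. (f has_derivative L) (at x) \<and> (\<forall>c v. L (c *s v) = c * L v))"

lemma cdifferentiable_at_const [simp]: "cdifferentiable_at (\<lambda>x. c) x"
  unfolding cdifferentiable_at_def by (intro exI[of _ "\<lambda>_. 0"]) auto

lemma cdifferentiable_at_component [simp]: "cdifferentiable_at (\<lambda>x. x $ i) x"
  unfolding cdifferentiable_at_def
  by (intro exI[of _ "\<lambda>v. v $ i"]) (auto intro: bounded_linear_imp_has_derivative)

lemma cdifferentiable_at_add:
  "cdifferentiable_at f x \<Longrightarrow> cdifferentiable_at g x \<Longrightarrow> cdifferentiable_at (\<lambda>x. f x + g x) x"
  unfolding cdifferentiable_at_def
proof (elim exE conjE)
  fix L M assume L: "(f has_derivative L) (at x)" "\<forall>c v. L (c *s v) = c * L v"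
    and M: "(g has_derivative M) (at x)" "\<forall>c v. M (c *s v) = c * M v"
  show "\<exists>L. ((\<lambda>x. f x + g x) has_derivative L) (at x) \<and> (\<forall>c v. L (c *s v) = c * L v)"
    using has_derivative_add[OF L(1) M(1)] L(2) M(2)
    by (intro exI[of _ "\<lambda>h. L h + M h"]) (auto simp: algebra_simps)
qed

lemma cdifferentiable_at_mult:
  "cdifferentiable_at f x \<Longrightarrow> cdifferentiable_at g x \<Longrightarrow> cdifferentiable_at (\<lambda>x. f x * g x) x"
  unfolding cdifferentiable_at_def
proof (elim exE conjE)
  fix L M assume L: "(f has_derivative L) (at x)" "\<forall>c v. L (c *s v) = c * L v"
    and M: "(g has_derivative M) (at x)" "\<forall>c v. M (c *s v) = c * M v"
  show "\<exists>L. ((\<lambda>x. f x * g x) has_derivative L) (at x) \<and> (\<forall>c v. L (c *s v) = c * L v)"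
    using has_derivative_mult[OF L(1) M(1)] L(2) M(2)
    by (intro exI[of _ "\<lambda>h. f x * M h + L h * g x"]) (auto simp: algebra_simps)
qed

lemma cdifferentiable_at_diff:
  "cdifferentiable_at f x \<Longrightarrow> cdifferentiable_at g x \<Longrightarrow> cdifferentiable_at (\<lambda>x. f x - g x) x"
  using cdifferentiable_at_add[of f x "\<lambda>x. (-1) * g x"] cdifferentiable_at_mult[of "\<lambda>x. -1" x g]
  by simp

lemma cdifferentiable_at_power: "cdifferentiable_at f x \<Longrightarrow> cdifferentiable_at (\<lambda>x. f x ^ n) x"
  by (induction n) (auto intro: cdifferentiable_at_mult)

lemma germ_holoI: "(\<And>x. cdifferentiable_at f x) \<Longrightarrow> germ_holo f"
  unfolding germ_holo_def cholo_on_def cdifferentiable_at_def by (intro exI[of _ UNIV]) auto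

lemma germ_holo_add: "germ_holo f \<Longrightarrow> germ_holo g \<Longrightarrow> germ_holo (\<lambda>x. f x + g x)"
  unfolding germ_holo_def
proof (elim exE conjE)
  fix U V assume "open U" "0 \<in> U" "cholo_on U f" "open V" "0 \<in> V" "cholo_on V g"
  then show "\<exists>W. open W \<and> 0 \<in> W \<and> cholo_on W (\<lambda>x. f x + g x)"
    by (intro exI[of _ "U \<inter> V"])
       (auto simp: cholo_on_def intro!: cdifferentiable_at_add[unfolded cdifferentiable_at_def])
qed

lemma germ_holo_mult: "germ_holo f \<Longrightarrow> germ_holo g \<Longrightarrow> germ_holo (\<lambda>x. f x * g x)"
  unfolding germ_holo_def
proof (elim exE conjE)
  fix U V assume "open U" "0 \<in> U" "cholo_on U f" "open V" "0 \<in> V" "cholo_on V g"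
  then show "\<exists>W. open W \<and> 0 \<in> W \<and> cholo_on W (\<lambda>x. f x * g x)"
    by (intro exI[of _ "U \<inter> V"])
       (auto simp: cholo_on_def intro!: cdifferentiable_at_mult[unfolded cdifferentiable_at_def])
qed

lemma germ_holo_const [simp]: "germ_holo (\<lambda>x. c)"
  by (rule germ_holoI) simp

lemma gen_ideal_germ_holo: "f \<in> gen_ideal S \<Longrightarrow> germ_holo f"
  unfolding gen_ideal_def by blast

lemma gen_ideal_generator: "s \<in> S \<Longrightarrow> germ_holo s \<Longrightarrow> s \<in> gen_ideal S"
  unfolding gen_ideal_def
  by (intro CollectI conjI exI[of _ "{s}"] exI[of _ "\<lambda>_ _. 1"]) auto

lemma gen_ideal_mult_left:
  assumes "germ_holo a" "f \<in> gen_ideal S"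
  shows "(\<lambda>x. a x * f x) \<in> gen_ideal S"
proof -
  obtain F h where F: "finite F" "F \<subseteq> S" "\<forall>f\<in>F. germ_holo (h f)"
    "eventually (\<lambda>x. f x = (\<Sum>g\<in>F. h g x * g x)) (nhds 0)"
    using assms(2) unfolding gen_ideal_def by blast
  show ?thesis unfolding gen_ideal_def
  proof (intro CollectI conjI exI[of _ F] exI[of _ "\<lambda>g x. a x * h g x"])
    show "germ_holo (\<lambda>x. a x * f x)" using assms gen_ideal_germ_holo germ_holo_mult by blast
    show "\<forall>g\<in>F. germ_holo (\<lambda>x. a x * h g x)" using F(3) assms(1) germ_holo_mult by blast
    show "eventually (\<lambda>x. a x * f x = (\<Sum>g\<in>F. a x * h g x * g x)) (nhds 0)"
      using F(4) by eventually_elim (simp add: sum_distrib_left mult.assoc)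
  qed (use F in auto)
qed

lemma gen_ideal_add:
  fixes S :: "(complex^'n \<Rightarrow> complex) set"
  assumes "f \<in> gen_ideal S" "g \<in> gen_ideal S"
  shows "(\<lambda>x. f x + g x) \<in> gen_ideal S"
proof -
  obtain F h where F: "finite F" "F \<subseteq> S" "\<forall>f\<in>F. germ_holo (h f)"
    "eventually (\<lambda>x. f x = (\<Sum>j\<in>F. h j x * j x)) (nhds 0)"
    using assms(1) unfolding gen_ideal_def by blast
  obtain G k where G: "finite G" "G \<subseteq> S" "\<forall>f\<in>G. germ_holo (k f)"
    "eventually (\<lambda>x. g x = (\<Sum>j\<in>G. k j x * j x)) (nhds 0)"
    using assms(2) unfolding gen_ideal_def by blast
  define extend :: "_ \<Rightarrow> (_ \<Rightarrow> complex^'n \<Rightarrow> complex) \<Rightarrow> (complex^'n \<Rightarrow> complex) \<Rightarrow> _"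
    where "extend A a j x = (if j \<in> A then a j x else 0)" for A a j x
  have extend_sum: "(\<Sum>j\<in>F \<union> G. extend A a j x * j x) = (\<Sum>j\<in>A. a j x * j x)"
    if "A \<subseteq> F \<union> G" for A a x
    using that F(1) G(1) unfolding extend_def by (intro sum.mono_neutral_cong_right) auto
  have extend_holo: "germ_holo (extend A a j)" if "\<forall>j\<in>A. germ_holo (a j)" for A a j
    using that unfolding extend_def by (cases "j \<in> A") auto
  show ?thesis unfolding gen_ideal_def
  proof (intro CollectI conjI exI[of _ "F \<union> G"] exI[of _ "\<lambda>j x. extend F h j x + extend G k j x"])
    show "germ_holo (\<lambda>x. f x + g x)" using assms gen_ideal_germ_holo germ_holo_add by blast
    show "\<forall>j\<in>F \<union> G. germ_holo (\<lambda>x. extend F h j x + extend G k j x)"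
      using F(3) G(3) by (auto intro!: germ_holo_add extend_holo)
    show "eventually (\<lambda>x. f x + g x = (\<Sum>j\<in>F \<union> G. (extend F h j x + extend G k j x) * j x)) (nhds 0)"
      using F(4) G(4) by eventually_elim (simp add: distrib_right sum.distrib extend_sum)
  qed (use F G in auto)
qed

section \<open>Curves and the invariant \<open>T1\<close>\<close>

lemma has_derivative_vec_lambda:
  fixes f :: "'i::finite \<Rightarrow> 'a::euclidean_space \<Rightarrow> 'b::real_normed_vector"
  assumes "\<And>i. (f i has_derivative f' i) (at x)"
  shows "((\<lambda>y. \<chi> i. f i y) has_derivative (\<lambda>h. \<chi> i. f' i h)) (at x)"
proof -
  have "linear (f' i)" for i using assms has_derivative_linear by blast
  then have "linear (\<lambda>h. \<chi> i. f' i h)"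
    by (intro linearI) (simp_all add: vec_eq_iff linear_add linear_scale)
  moreover have "((\<lambda>y. \<chi> i. (1 / norm (y - x)) *\<^sub>R (f i y - (f i x + f' i (y - x))))
      \<longlongrightarrow> (\<chi> i. 0)) (at x)"
    using assms unfolding has_derivative_at' has_derivative_within by (intro tendsto_vec_lambda) blast
  moreover have "(\<lambda>y. \<chi> i. (1 / norm (y - x)) *\<^sub>R (f i y - (f i x + f' i (y - x)))) =
      (\<lambda>y. (1 / norm (y - x)) *\<^sub>R ((\<chi> i. f i y) - ((\<chi> i. f i x) + (\<chi> i. f' i (y - x)))))"
    by (simp add: fun_eq_iff vec_eq_iff)
  ultimately show ?thesis
    unfolding has_derivative_within by (simp add: linear_conv_bounded_linear zero_vec_def)
qed


lemma curve_has_derivative: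
  fixes \<gamma> :: "complex \<Rightarrow> complex^'n"
  assumes "open U" "t \<in> U" "\<And>i. (\<lambda>t. \<gamma> t $ i) holomorphic_on U"
  shows "(\<gamma> has_derivative (\<lambda>s. s *s (\<chi> i. deriv (\<lambda>t. \<gamma> t $ i) t))) (at t)"
proof -
  have "((\<lambda>t. \<gamma> t $ i) has_derivative (\<lambda>s. deriv (\<lambda>t. \<gamma> t $ i) t * s)) (at t)" for i
    using holomorphic_derivI[OF assms(3,1,2), of i UNIV] unfolding has_field_derivative_def by simp
  then have "((\<lambda>y. \<chi> i. \<gamma> y $ i) has_derivative (\<lambda>s. \<chi> i. deriv (\<lambda>t. \<gamma> t $ i) t * s)) (at t)"
    by (rule has_derivative_vec_lambda[where f="\<lambda>i y. \<gamma> y $ i"])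
  then show ?thesis
    by (simp add: vec_lambda_eta vector_scalar_mult_def mult.commute)
qed

lemma curve_continuous_on:
  fixes \<gamma> :: "complex \<Rightarrow> complex^'n"
  assumes "\<And>i. (\<lambda>t. \<gamma> t $ i) holomorphic_on U"
  shows "continuous_on U \<gamma>"
proof -
  have "continuous_on U (\<lambda>t. \<chi> i. \<gamma> t $ i)"
    using assms by (intro continuous_on_vec_lambda holomorphic_on_imp_continuous_on)
  then show ?thesis by (simp add: vec_lambda_eta)
qed

lemma eventually_nhds_curve_compose:
  fixes \<gamma> :: "complex \<Rightarrow> complex^'n"
  assumes "open U" "0 \<in> U" "\<And>i. (\<lambda>t. \<gamma> t $ i) holomorphic_on U"
    and "eventually P (nhds (\<gamma> 0))"
  shows "eventually (\<lambda>t. P (\<gamma> t)) (nhds 0)"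
proof -
  obtain S where S: "open S" "\<gamma> 0 \<in> S" "\<And>x. x \<in> S \<Longrightarrow> P x"
    using assms(4) unfolding eventually_nhds by blast
  have "open (U \<inter> \<gamma> -` S)"
    using continuous_open_preimage[OF curve_continuous_on[OF assms(3)] assms(1) S(1)]
    by (simp add: Int_def)
  then show ?thesis
    unfolding eventually_nhds using assms(2) S(2,3) by (intro exI[of _ "U \<inter> \<gamma> -` S"]) auto
qed

lemma germ_holo1_curve_compose:
  fixes \<gamma> :: "complex \<Rightarrow> complex^'n"
  assumes "germ_holo h" "open U" "0 \<in> U" "\<And>i. (\<lambda>t. \<gamma> t $ i) holomorphic_on U" "\<gamma> 0 = 0"
  shows "germ_holo1 (\<lambda>t. h (\<gamma> t))"
proof -
  obtain V where V: "open V" "0 \<in> V" "cholo_on V h" using assms(1) unfolding germ_holo_def by blast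
  define W where "W = U \<inter> \<gamma> -` V"
  have W: "open W" "0 \<in> W"
    using continuous_open_preimage[OF curve_continuous_on[OF assms(4)] assms(2) V(1)] assms(3,5) V(2)
    by (auto simp: W_def Int_def)
  have "((\<lambda>t. h (\<gamma> t)) has_field_derivative L (\<chi> i. deriv (\<lambda>t. \<gamma> t $ i) t)) (at t)"
    if "t \<in> W" "(h has_derivative L) (at (\<gamma> t))" "\<forall>c v. L (c *s v) = c * L v" for t L
  proof -
    have "((\<lambda>t. h (\<gamma> t)) has_derivative (\<lambda>s. L (s *s (\<chi> i. deriv (\<lambda>t. \<gamma> t $ i) t)))) (at t)"
      using diff_chain_at[OF curve_has_derivative[OF assms(2) _ assms(4)] that(2)] that(1)
      by (simp add: W_def o_def)
    moreover have "(\<lambda>s. L (s *s d)) = (\<lambda>s. L d * s)" for d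
      using that(3) by (simp add: mult.commute)
    ultimately show ?thesis by (simp add: has_field_derivative_def)
  qed
  then have "(\<lambda>t. h (\<gamma> t)) holomorphic_on W"
    using V(3) unfolding holomorphic_on_def cholo_on_def W_def
    by (meson IntD2 field_differentiable_at_within field_differentiable_def vimageE)
  then show ?thesis unfolding germ_holo1_def using W by blast
qed


lemma gen_ideal_curve_divisible:
  fixes \<gamma> :: "complex \<Rightarrow> complex^'n"
  assumes curve: "open U" "0 \<in> U" "\<And>i. (\<lambda>t. \<gamma> t $ i) holomorphic_on U" "\<gamma> 0 = 0"
    and gens: "\<And>s. s \<in> S \<Longrightarrow> \<exists>Q. germ_holo1 Q \<and> eventually (\<lambda>t. s (\<gamma> t) = t ^ n * Q t) (nhds 0)"
    and g: "g \<in> gen_ideal S"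
  shows "\<exists>Q. germ_holo1 Q \<and> eventually (\<lambda>t. g (\<gamma> t) = t ^ n * Q t) (nhds 0)"
proof -
  obtain F h where F: "finite F" "F \<subseteq> S" "\<forall>f\<in>F. germ_holo (h f)"
    "eventually (\<lambda>x. g x = (\<Sum>f\<in>F. h f x * f x)) (nhds 0)"
    using g unfolding gen_ideal_def by blast
  obtain Q where Q: "\<And>f. f \<in> F \<Longrightarrow> germ_holo1 (Q f)"
    "\<And>f. f \<in> F \<Longrightarrow> eventually (\<lambda>t. f (\<gamma> t) = t ^ n * Q f t) (nhds 0)"
    using gens F(2) by (metis subsetD)
  have "eventually (\<lambda>t. g (\<gamma> t) = (\<Sum>f\<in>F. h f (\<gamma> t) * f (\<gamma> t))) (nhds 0)"
    using eventually_nhds_curve_compose[OF curve(1-3)] F(4) curve(4) by simp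
  moreover have "eventually (\<lambda>t. \<forall>f\<in>F. f (\<gamma> t) = t ^ n * Q f t) (nhds 0)"
    using Q(2) F(1) by (simp add: eventually_ball_finite)
  ultimately have "eventually (\<lambda>t. g (\<gamma> t) = t ^ n * (\<Sum>f\<in>F. h f (\<gamma> t) * Q f t)) (nhds 0)"
  proof eventually_elim
    case (elim t)
    then have "g (\<gamma> t) = (\<Sum>f\<in>F. h f (\<gamma> t) * (t ^ n * Q f t))" by (simp cong: sum.cong)
    then show ?case by (simp add: sum_distrib_left algebra_simps)
  qed
  moreover have "germ_holo1 (\<lambda>t. \<Sum>f\<in>F. h f (\<gamma> t) * Q f t)"
    using F(1,3) Q(1) curve by (intro germ_holo1_sum germ_holo1_mult germ_holo1_curve_compose) auto
  ultimately show ?thesis by blast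
qed

lemma curves_component_germ_holo1:
  assumes "z \<in> curves"
  shows "germ_holo1 (\<lambda>t. z t $ i)"
  using assms unfolding curves_def germ_holo1_def by blast

lemma curves_component_ord0_ge_1:
  assumes "z \<in> curves"
  shows "1 \<le> ord0 (\<lambda>t. z t $ i)"
proof (cases rule: ord0_cases[OF curves_component_germ_holo1[OF assms, of i]])
  case 1
  then show ?thesis by simp
next
  case (2 n h)
  have "z 0 = 0" using assms unfolding curves_def by blast
  then have "0 ^ n * h 0 = 0" using eventually_nhds_x_imp_x[OF 2(3)] by simp
  then have "n \<noteq> 0" using 2(2) by auto
  then show ?thesis using 2(4) by (simp add: one_enat_def)
qed

lemma curve_ord_enat:
  assumes "z \<in> curves"
  obtains m where "curve_ord z = enat m" "1 \<le> m"
proof -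
  have "\<exists>i. ord0 (\<lambda>t. z t $ i) \<noteq> \<infinity>"
  proof (rule ccontr)
    assume "\<not> ?thesis"
    then have "eventually (\<lambda>t. z t $ i = 0) (nhds 0)" for i
      by (cases rule: ord0_cases[OF curves_component_germ_holo1[OF assms, of i]]) auto
    then have "eventually (\<lambda>t. \<forall>i. z t $ i = 0) (nhds 0)" by (simp add: eventually_all_finite)
    then have "eventually (\<lambda>t. z t = 0) (nhds 0)" by eventually_elim (simp add: vec_eq_iff)
    then show False using assms unfolding curves_def by blast
  qed
  then obtain i where "ord0 (\<lambda>t. z t $ i) \<noteq> \<infinity>" by blast
  moreover have "curve_ord z \<le> ord0 (\<lambda>t. z t $ i)" unfolding curve_ord_def by (rule INF_lower) simp
  ultimately have "curve_ord z \<noteq> \<infinity>" by (metis enat_ord_simps(5) neq_iff)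
  moreover have "1 \<le> curve_ord z"
    unfolding curve_ord_def using curves_component_ord0_ge_1[OF assms] by (rule INF_greatest)
  ultimately show ?thesis using that by (cases "curve_ord z") (auto simp: one_enat_def)
qed

lemma T1_ge_of_curve:
  assumes "\<gamma> \<in> curves" "curve_ord \<gamma> = 1" "\<And>g. g \<in> J \<Longrightarrow> e \<le> ord0 (\<lambda>t. g (\<gamma> t))"
  shows "ereal_of_enat e \<le> T1 J"
proof -
  have "ereal_of_enat (curve_ord \<gamma>) = 1" using assms(2) by (simp add: one_enat_def one_ereal_def)
  then have "ereal_of_enat e \<le> (INF g\<in>J. ereal_of_enat (ord0 (g \<circ> \<gamma>)) / ereal_of_enat (curve_ord \<gamma>))"
    using assms(3) by (intro INF_greatest) (simp add: o_def)
  also have "\<dots> \<le> T1 J" unfolding T1_def using assms(1) by (rule SUP_upper)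
  finally show ?thesis .
qed

lemma T1_le:
  fixes J :: "(complex^'n \<Rightarrow> complex) set"
  assumes "\<And>z. z \<in> curves \<Longrightarrow> \<exists>g\<in>J. ord0 (\<lambda>t. g (z t)) \<le> enat k * curve_ord z"
  shows "T1 J \<le> ereal (real k)"
  unfolding T1_def
proof (rule SUP_least)
  fix z :: "complex \<Rightarrow> complex^'n" assume z: "z \<in> curves"
  obtain m where m: "curve_ord z = enat m" "1 \<le> m" using curve_ord_enat[OF z] .
  obtain g where g: "g \<in> J" "ord0 (\<lambda>t. g (z t)) \<le> enat (k * m)" using assms[OF z] m(1) by auto
  have "ereal_of_enat (ord0 (g \<circ> z)) \<le> ereal (real m) * ereal (real k)"
    using g(2) by (simp add: o_def ereal_of_enat_le_iff[symmetric] mult.commute del: ereal_of_enat_le_iff)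
  then have "ereal_of_enat (ord0 (g \<circ> z)) / ereal_of_enat (curve_ord z) \<le> ereal (real k)"
    using m by (subst ereal_divide_le_pos) auto
  then show "(INF g\<in>J. ereal_of_enat (ord0 (g \<circ> z)) / ereal_of_enat (curve_ord z)) \<le> ereal (real k)"
    by (rule INF_lower2[OF g(1)])
qed


section \<open>The ideal \<open>(z\<^sub>1\<^sup>3 - z\<^sub>3 z\<^sub>2, z\<^sub>2\<^sup>2)\<close> cut by a hyperplane\<close>

definition gen1 :: "complex^3 \<Rightarrow> complex" where "gen1 = (\<lambda>x. x$1 ^ 3 - x$3 * x$2)"
definition gen2 :: "complex^3 \<Rightarrow> complex" where "gen2 = (\<lambda>x. x$2 ^ 2)"
definition I0 :: "(complex^3 \<Rightarrow> complex) set" where "I0 = gen_ideal {gen1, gen2}"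
definition I0_hyp :: "complex^3 \<Rightarrow> (complex^3 \<Rightarrow> complex) set" where
  "I0_hyp c = gen_ideal (I0 \<union> {linform c})"

lemma linform_3: "linform c x = c$1 * x$1 + c$2 * x$2 + c$3 * x$3" for c x :: "complex^3"
  by (simp add: linform_def sum_3)

lemma germ_holo_linform_3: "germ_holo (linform c)" for c :: "complex^3"
  unfolding linform_3 by (intro germ_holoI cdifferentiable_at_add cdifferentiable_at_mult) simp_all

lemma I0_hyp_generators: "gen1 \<in> I0_hyp c" "gen2 \<in> I0_hyp c" "linform c \<in> I0_hyp c"
proof -
  have holo: "germ_holo gen1" "germ_holo gen2"
    unfolding gen1_def gen2_def
    by (intro germ_holoI cdifferentiable_at_diff cdifferentiable_at_power cdifferentiable_at_mult
        cdifferentiable_at_component)+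
  then have "gen1 \<in> I0" "gen2 \<in> I0" unfolding I0_def by (auto intro: gen_ideal_generator)
  then show "gen1 \<in> I0_hyp c" "gen2 \<in> I0_hyp c" "linform c \<in> I0_hyp c"
    unfolding I0_hyp_def
    by (auto intro!: gen_ideal_generator germ_holo_linform_3 holo)
qed

text \<open>This is \<open>c\<^sub>3 gen1 + z\<^sub>2 linform c - c\<^sub>2 gen2\<close>, in which \<open>z\<^sub>3\<close> is eliminated.\<close>

lemma cubic_in_I0_hyp: "(\<lambda>x. c$3 * x$1 ^ 3 + c$1 * (x$1 * x$2)) \<in> I0_hyp c"
proof -
  have "(\<lambda>x. c$3 * gen1 x + (x$2 * linform c x + (- c$2) * gen2 x)) \<in> I0_hyp c"
    unfolding I0_hyp_def using I0_hyp_generators[of c, unfolded I0_hyp_def]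
    by (intro gen_ideal_add gen_ideal_mult_left) (auto intro: germ_holoI)
  moreover have "(\<lambda>x. c$3 * gen1 x + (x$2 * linform c x + (- c$2) * gen2 x))
      = (\<lambda>x. c$3 * x$1 ^ 3 + c$1 * (x$1 * x$2))"
    by (rule ext) (simp add: gen1_def gen2_def linform_3 algebra_simps power2_eq_square)
  ultimately show ?thesis by simp
qed


lemma curve_vector_3:
  fixes u v w :: "complex \<Rightarrow> complex"
  defines "\<gamma> \<equiv> \<lambda>t. vector [u t, v t, w t] :: complex^3"
  assumes "u holomorphic_on UNIV" "v holomorphic_on UNIV" "w holomorphic_on UNIV"
    and "u 0 = 0" "v 0 = 0" "w 0 = 0" and "u = (\<lambda>t. t) \<or> w = (\<lambda>t. t)"
  shows "\<gamma> \<in> curves" "curve_ord \<gamma> = 1"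
proof -
  obtain i where i: "(\<lambda>t. \<gamma> t $ i) = (\<lambda>t. t)"
    using assms(8) unfolding \<gamma>_def by (metis vector_3(1,3))
  have "(\<lambda>t. \<gamma> t $ i) holomorphic_on UNIV" for i
    using exhaust_3[of i] assms(2-4) unfolding \<gamma>_def by (elim disjE) simp_all
  moreover have "\<gamma> 0 = 0" using assms(5-7) unfolding \<gamma>_def by (simp add: vec_eq_iff forall_3)
  moreover have "\<not> eventually (\<lambda>t. \<gamma> t = 0) (nhds 0)"
  proof
    assume "eventually (\<lambda>t. \<gamma> t = 0) (nhds 0)"
    then have "eventually (\<lambda>t. \<gamma> t $ i = 0) (nhds 0)" by eventually_elim simp
    then have "ord0 (\<lambda>t. \<gamma> t $ i) = \<infinity>" by (rule ord0_eventually_zero)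
    then show False using i ord0_ident by simp
  qed
  ultimately show curve: "\<gamma> \<in> curves" unfolding curves_def by blast
  have "curve_ord \<gamma> \<le> ord0 (\<lambda>t. \<gamma> t $ i)" unfolding curve_ord_def by (rule INF_lower) simp
  then have "curve_ord \<gamma> \<le> 1" using i ord0_ident by simp
  moreover have "1 \<le> curve_ord \<gamma>"
    unfolding curve_ord_def using curves_component_ord0_ge_1[OF curve] by (rule INF_greatest)
  ultimately show "curve_ord \<gamma> = 1" by simp
qed

lemma T1_I0_hyp_ge_of_curve:
  fixes u v w :: "complex \<Rightarrow> complex"
  assumes "u holomorphic_on UNIV" "v holomorphic_on UNIV" "w holomorphic_on UNIV"
    and "u 0 = 0" "v 0 = 0" "w 0 = 0" and "u = (\<lambda>t. t) \<or> w = (\<lambda>t. t)"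
    and "germ_holo1 q" "\<And>t. gen1 (vector [u t, v t, w t]) = t ^ n * q t"
    and "germ_holo1 r" "\<And>t. gen2 (vector [u t, v t, w t]) = t ^ n * r t"
    and "\<And>t. linform c (vector [u t, v t, w t]) = 0"
  shows "ereal (real n) \<le> T1 (I0_hyp c)"
proof -
  define \<gamma> where "\<gamma> = (\<lambda>t. vector [u t, v t, w t] :: complex^3)"
  note curve = curve_vector_3[OF assms(1-7), folded \<gamma>_def]
  have hol: "(\<lambda>t. \<gamma> t $ i) holomorphic_on UNIV" "\<gamma> 0 = 0" for i
    using curve(1) unfolding curves_def \<gamma>_def
    using exhaust_3[of i] assms(1-6) by (auto simp: vec_eq_iff forall_3)
  have gens0: "\<exists>Q. germ_holo1 Q \<and> eventually (\<lambda>t. s (\<gamma> t) = t ^ n * Q t) (nhds 0)"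
    if "s \<in> {gen1, gen2}" for s
    using that assms(8-11) unfolding \<gamma>_def by auto
  have "\<exists>Q. germ_holo1 Q \<and> eventually (\<lambda>t. s (\<gamma> t) = t ^ n * Q t) (nhds 0)"
    if "s \<in> I0 \<union> {linform c}" for s
  proof (cases "s \<in> I0")
    case True
    show ?thesis using gen_ideal_curve_divisible[OF open_UNIV UNIV_I hol(1) hol(2) gens0 True[unfolded I0_def]] by simp
  next
    case False
    then show ?thesis using that assms(12) by (intro exI[of _ "\<lambda>t. 0"]) (simp add: \<gamma>_def)
  qed
  then have "\<exists>Q. germ_holo1 Q \<and> eventually (\<lambda>t. g (\<gamma> t) = t ^ n * Q t) (nhds 0)"
    if "g \<in> I0_hyp c" for g
    using that unfolding I0_hyp_def by (rule gen_ideal_curve_divisible[OF open_UNIV UNIV_I hol])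
  then have "enat n \<le> ord0 (\<lambda>t. g (\<gamma> t))" if "g \<in> I0_hyp c" for g
    using that by (metis ord0_ge_if_divisible)
  from T1_ge_of_curve[OF curve this] show ?thesis by simp
qed

lemma T1_I0_hyp_ge_3:
  assumes "c$3 \<noteq> 0"
  shows "3 \<le> T1 (I0_hyp c)"
proof -
  have "(\<lambda>t. - (c$1 / c$3) * t) holomorphic_on UNIV" by (intro holomorphic_intros)
  then show ?thesis
    using T1_I0_hyp_ge_of_curve[where u="\<lambda>t. t" and v="\<lambda>t. 0" and w="\<lambda>t. - (c$1 / c$3) * t"
        and q="\<lambda>t. 1" and r="\<lambda>t. 0" and n=3 and c=c] assms
    by (simp add: gen1_def gen2_def linform_3 field_simps)
qed

lemma T1_I0_hyp_ge_4:
  assumes "c$3 \<noteq> 0" "c$1 \<noteq> 0"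
  shows "4 \<le> T1 (I0_hyp c)"
proof -
  define s where "s = c$3 / c$1"
  define w where "w t = - (c$1 / c$3) * t + (c$2 * s / c$3) * t ^ 2" for t
  have "gen1 (vector [t, - s * t ^ 2, w t]) = t ^ 4 * (c$2 * s ^ 2 / c$3)" for t
    using assms unfolding gen1_def w_def s_def by (simp add: field_simps power_numeral_reduce)
  moreover have "gen2 (vector [t, - s * t ^ 2, w t]) = t ^ 4 * s ^ 2" for t
    unfolding gen2_def by (simp add: power_mult_distrib flip: power_mult)
  moreover have "linform c (vector [t, - s * t ^ 2, w t]) = 0" for t
    using assms unfolding linform_3 w_def s_def by (simp add: field_simps)
  moreover have "w holomorphic_on UNIV" "w 0 = 0" unfolding w_def by (auto intro!: holomorphic_intros)
  ultimately show ?thesis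
    using T1_I0_hyp_ge_of_curve[where u="\<lambda>t. t" and v="\<lambda>t. - s * t ^ 2" and w=w
        and q="\<lambda>t. c$2 * s ^ 2 / c$3" and r="\<lambda>t. s ^ 2" and n=4 and c=c]
    by (simp add: holomorphic_intros)
qed

lemma T1_I0_hyp_infinite:
  assumes "c$3 = 0"
  shows "T1 (I0_hyp c) = \<infinity>"
proof -
  have "ereal (real n) \<le> T1 (I0_hyp c)" for n
    using T1_I0_hyp_ge_of_curve[where u="\<lambda>t. 0" and v="\<lambda>t. 0" and w="\<lambda>t. t"
        and q="\<lambda>t. 0" and r="\<lambda>t. 0" and n=n and c=c] assms
    by (simp add: gen1_def gen2_def linform_3)
  then have "(SUP n. ereal (real n)) \<le> T1 (I0_hyp c)" by (rule SUP_least)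
  then show ?thesis by (simp add: SUP_nat_Infty)
qed


lemma curve_ord_3:
  fixes z :: "complex \<Rightarrow> complex^3"
  shows "curve_ord z = min (ord0 (\<lambda>t. z t $ 1)) (min (ord0 (\<lambda>t. z t $ 2)) (ord0 (\<lambda>t. z t $ 3)))"
  unfolding curve_ord_def UNIV_3 by (simp add: inf_min)

lemma ord0_cube_minus_mult:
  assumes "germ_holo1 u" "germ_holo1 v" "germ_holo1 w"
    and "ord0 u = enat m" "enat (3 * m) < ord0 w + ord0 v"
  shows "ord0 (\<lambda>t. u t ^ 3 - w t * v t) = enat (3 * m)"
proof -
  have cube: "ord0 (\<lambda>t. u t ^ 3) = enat (3 * m)"
    using ord0_power[OF assms(1), of 3] assms(4) by (simp add: of_nat_eq_enat)
  have holo: "germ_holo1 (\<lambda>t. (-1) * (w t * v t))"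
    using assms(2,3) by (intro germ_holo1_mult) simp_all
  have "ord0 (\<lambda>t. (-1) * (w t * v t)) = ord0 w + ord0 v"
    using ord0_cmult[OF germ_holo1_mult[OF assms(3,2)], of "-1"] ord0_mult[OF assms(3,2)] by simp
  then have "ord0 (\<lambda>t. u t ^ 3 + (-1) * (w t * v t)) = ord0 (\<lambda>t. u t ^ 3)"
    using cube assms(5) by (intro ord0_add_eq_left[OF germ_holo1_power[OF assms(1)] holo]) simp
  moreover have "(\<lambda>t. u t ^ 3 + (-1) * (w t * v t)) = (\<lambda>t. u t ^ 3 - w t * v t)" by simp
  ultimately show ?thesis using cube by simp
qed

lemma ord0_linear_combination_3:
  assumes "germ_holo1 u" "germ_holo1 v" "germ_holo1 w" "c \<noteq> 0"
    and "ord0 w = enat m" "enat m < ord0 u" "enat m < ord0 v"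
  shows "ord0 (\<lambda>t. a * u t + b * v t + c * w t) = enat m"
proof -
  have "enat m < ord0 (\<lambda>t. a * u t)" "enat m < ord0 (\<lambda>t. b * v t)"
    using order.strict_trans2[OF assms(6) ord0_cmult_ge[OF assms(1)]]
      order.strict_trans2[OF assms(7) ord0_cmult_ge[OF assms(2)]] by blast+
  then have "enat m < min (ord0 (\<lambda>t. a * u t)) (ord0 (\<lambda>t. b * v t))" by simp
  also have "\<dots> \<le> ord0 (\<lambda>t. a * u t + b * v t)"
    using assms(1,2) by (intro ord0_add_ge germ_holo1_mult) simp_all
  finally have "ord0 (\<lambda>t. c * w t) < ord0 (\<lambda>t. a * u t + b * v t)"
    using ord0_cmult[OF assms(3,4)] assms(5) by simp
  then have "ord0 (\<lambda>t. c * w t + (a * u t + b * v t)) = ord0 (\<lambda>t. c * w t)"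
    using assms(1-3) by (intro ord0_add_eq_left) (auto intro!: germ_holo1_add germ_holo1_mult)
  then show ?thesis using ord0_cmult[OF assms(3,4)] assms(5) by (simp add: ac_simps)
qed

lemma enat_less_if_mult_less:
  assumes "2 \<le> k" "enat (k * m) < 2 * x"
  shows "enat m < x"
proof (cases x)
  case (enat a)
  moreover have "2 * enat a = enat (2 * a)" by (metis enat_numeral times_enat_simps(1))
  ultimately have "k * m < 2 * a" using assms(2) by simp
  moreover have "2 * m \<le> k * m" using assms(1) by simp
  ultimately have "m < a" by linarith
  then show ?thesis using enat by simp
qed simp

lemma T1_I0_hyp_le:
  fixes c :: "complex^3" and k :: nat
  assumes c3: "c$3 \<noteq> 0" and k: "2 \<le> k" and e: "e \<in> I0_hyp c"
    and e_ord: "\<And>z m. z \<in> curves \<Longrightarrow> curve_ord z = enat m \<Longrightarrow> ord0 (\<lambda>t. z t $ 1) = enat m \<Longrightarrow>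
      enat (k * m) < 2 * ord0 (\<lambda>t. z t $ 2) \<Longrightarrow> ord0 (\<lambda>t. e (z t)) \<le> enat (k * m)"
  shows "T1 (I0_hyp c) \<le> ereal (real k)"
proof (rule T1_le)
  fix z :: "complex \<Rightarrow> complex^3" assume z: "z \<in> curves"
  obtain m where m: "curve_ord z = enat m" "1 \<le> m" using curve_ord_enat[OF z] .
  have holo: "germ_holo1 (\<lambda>t. z t $ i)" for i using curves_component_germ_holo1[OF z] .
  define x1 x2 x3 where "x1 = ord0 (\<lambda>t. z t $ 1)" and "x2 = ord0 (\<lambda>t. z t $ 2)"
    and "x3 = ord0 (\<lambda>t. z t $ 3)"
  have min: "min x1 (min x2 x3) = enat m" using m(1) curve_ord_3[of z] unfolding x1_def x2_def x3_def by simp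
  have km: "m \<le> k * m" using k by simp
  have "\<exists>g\<in>I0_hyp c. ord0 (\<lambda>t. g (z t)) \<le> enat (k * m)"
  proof (cases "2 * x2 \<le> enat (k * m)")
    case True
    have "ord0 (\<lambda>t. gen2 (z t)) = 2 * x2" using ord0_power[OF holo, of 2] by (simp add: gen2_def x2_def)
    then show ?thesis using True I0_hyp_generators(2) by (intro bexI[of _ gen2]) simp_all
  next
    case False
    then have x2: "enat m < x2" using k unfolding not_le by (rule enat_less_if_mult_less[rotated])
    show ?thesis
    proof (cases "x1 = enat m")
      case True
      then show ?thesis using e e_ord[OF z m(1)] False unfolding x1_def x2_def
        by (intro bexI[of _ e]) (simp_all add: not_le)
    next
      case False
      then have "enat m < x1" "x3 = enat m" using min x2 by (auto simp: min_def split: if_splits)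
      then have "ord0 (\<lambda>t. c$1 * z t $ 1 + c$2 * z t $ 2 + c$3 * z t $ 3) = enat m"
        using x2 unfolding x1_def x2_def x3_def by (intro ord0_linear_combination_3 holo c3)
      then show ?thesis using I0_hyp_generators(3) km
        by (intro bexI[of _ "linform c"]) (simp_all add: linform_3)
    qed
  qed
  then show "\<exists>g\<in>I0_hyp c. ord0 (\<lambda>t. g (z t)) \<le> enat k * curve_ord z" using m(1) by simp
qed

lemma T1_I0_hyp_le_4:
  assumes "c$3 \<noteq> 0"
  shows "T1 (I0_hyp c) \<le> 4"
proof -
  have gen1_ord: "ord0 (\<lambda>t. gen1 (z t)) \<le> enat (4 * m)"
    if z: "z \<in> curves" "curve_ord z = enat m" and x1: "ord0 (\<lambda>t. z t $ 1) = enat m"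
      and x2: "enat (4 * m) < 2 * ord0 (\<lambda>t. z t $ 2)" for z m
  proof -
    have "curve_ord z \<le> ord0 (\<lambda>t. z t $ 3)" unfolding curve_ord_def by (rule INF_lower) simp
    then have x3: "enat m \<le> ord0 (\<lambda>t. z t $ 3)" using z(2) by simp
    have "enat (3 * m) < ord0 (\<lambda>t. z t $ 3) + ord0 (\<lambda>t. z t $ 2)"
    proof (cases "ord0 (\<lambda>t. z t $ 3)"; cases "ord0 (\<lambda>t. z t $ 2)")
      fix a b assume ab: "ord0 (\<lambda>t. z t $ 3) = enat a" "ord0 (\<lambda>t. z t $ 2) = enat b"
      moreover have "2 * enat b = enat (2 * b)" by (metis enat_numeral times_enat_simps(1))
      ultimately have "m \<le> a" "4 * m < 2 * b" using x2 x3 by simp_all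
      then have "3 * m < a + b" by linarith
      then show ?thesis using ab by simp
    qed simp_all
    then have "ord0 (\<lambda>t. gen1 (z t)) = enat (3 * m)"
      unfolding gen1_def using x1 by (intro ord0_cube_minus_mult curves_component_germ_holo1[OF z(1)])
    then show ?thesis by simp
  qed
  have "T1 (I0_hyp c) \<le> ereal (real 4)"
    by (rule T1_I0_hyp_le[OF assms _ I0_hyp_generators(1) gen1_ord]) simp
  then show ?thesis by simp
qed

lemma T1_I0_hyp_le_3:
  assumes "c$3 \<noteq> 0" "c$1 = 0"
  shows "T1 (I0_hyp c) \<le> 3"
proof -
  have cubic_ord: "ord0 (\<lambda>t. c$3 * z t $ 1 ^ 3 + c$1 * (z t $ 1 * z t $ 2)) \<le> enat (3 * m)"
    if "z \<in> curves" "curve_ord z = enat m" "ord0 (\<lambda>t. z t $ 1) = enat m"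
      "enat (3 * m) < 2 * ord0 (\<lambda>t. z t $ 2)" for z m
  proof -
    have holo: "germ_holo1 (\<lambda>t. z t $ 1)" using curves_component_germ_holo1[OF that(1)] .
    have "ord0 (\<lambda>t. c$3 * z t $ 1 ^ 3 + c$1 * (z t $ 1 * z t $ 2)) = ord0 (\<lambda>t. c$3 * z t $ 1 ^ 3)"
      using assms(2) by simp
    also have "\<dots> = ord0 (\<lambda>t. z t $ 1 ^ 3)" by (rule ord0_cmult[OF germ_holo1_power[OF holo] assms(1)])
    also have "\<dots> = of_nat 3 * enat m" using ord0_power[OF holo] that(3) by simp
    finally show ?thesis by (simp add: of_nat_eq_enat)
  qed
  have "T1 (I0_hyp c) \<le> ereal (real 3)"
    by (rule T1_I0_hyp_le[OF assms(1) _ cubic_in_I0_hyp cubic_ord]) simp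
  then show ?thesis by simp
qed


lemma T1_I0_hyp:
  assumes "c$3 \<noteq> 0"
  shows "T1 (I0_hyp c) = (if c$1 \<noteq> 0 then 4 else 3)"
  using assms T1_I0_hyp_ge_3 T1_I0_hyp_ge_4 T1_I0_hyp_le_3 T1_I0_hyp_le_4 by (simp add: order_antisym)

lemma Tq_2_I0: "Tq 2 I0 = 3"
proof -
  have "Tq 2 I0 = (INF c. T1 (I0_hyp c))"
  proof -
    have "{ws :: (complex^3) list. length ws = 2 - 1} = (\<lambda>c. [c]) ` UNIV"
      by (auto simp: length_Suc_conv)
    then show ?thesis unfolding Tq_def I0_hyp_def by (simp add: image_comp o_def)
  qed
  also have "\<dots> = 3"
  proof (rule antisym)
    show "(INF c. T1 (I0_hyp c)) \<le> 3"
      using T1_I0_hyp[of "vector [0, 0, 1]"] by (intro INF_lower2[of "vector [0, 0, 1]"]) simp_all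
    have "3 \<le> T1 (I0_hyp c)" for c
      using T1_I0_hyp_ge_3 T1_I0_hyp_infinite by (cases "c$3 = 0") simp_all
    then show "3 \<le> (INF c. T1 (I0_hyp c))" by (rule INF_greatest)
  qed
  finally show ?thesis .
qed

section \<open>Zariski open sets of hyperplanes and the generic value\<close>

lemma hom_poly_monomial: "hom_poly (\<lambda>x. \<Prod>i\<in>UNIV. x $ i ^ \<alpha> i)"
  unfolding hom_poly_def by (intro exI[of _ "sum \<alpha> UNIV"] exI[of _ "{\<alpha>}"] exI[of _ "\<lambda>_. 1"]) simp

text \<open>Only the polynomial shape of \<open>p\<close> matters: restricted to a suitable line through \<open>c\<^sub>0\<close> it is
  a continuous function of one variable that is nonzero near \<open>0\<close>, while the line meets each
  coordinate hyperplane at most once.\<close>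

lemma hom_poly_nonzero_off_coordinate_hyperplanes:
  fixes p :: "complex^'n \<Rightarrow> complex"
  assumes "hom_poly p" "p c0 \<noteq> 0"
  obtains c where "p c \<noteq> 0" "\<And>i. c $ i \<noteq> 0"
proof -
  obtain d F a where p: "p = (\<lambda>x. \<Sum>\<alpha>\<in>F. a \<alpha> * (\<Prod>i\<in>UNIV. x $ i ^ \<alpha> i))"
    using assms(1) unfolding hom_poly_def by blast
  define line where "line w = (\<chi> i. c0 $ i + w)" for w
  have "isCont (\<lambda>w. \<Sum>\<alpha>\<in>F. a \<alpha> * (\<Prod>i\<in>UNIV. (c0 $ i + w) ^ \<alpha> i)) 0"
    by (intro continuous_intros)
  then have "isCont (\<lambda>w. p (line w)) 0" by (simp add: p line_def)
  then have "eventually (\<lambda>w. p (line w) \<noteq> 0) (at 0)"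
    using assms(2) by (intro tendsto_imp_eventually_ne) (simp_all add: isCont_def line_def vec_lambda_eta)
  moreover have "eventually (\<lambda>w. \<forall>i. w \<noteq> - c0 $ i) (at (0::complex))"
    by (simp add: eventually_all_finite eventually_neq_at_within)
  ultimately have "eventually (\<lambda>w. p (line w) \<noteq> 0 \<and> (\<forall>i. w \<noteq> - c0 $ i)) (at (0::complex))"
    by eventually_elim simp
  then obtain w where "p (line w) \<noteq> 0" "\<forall>i. w \<noteq> - c0 $ i"
    using eventually_happens'[OF at_neq_bot] by blast
  then show ?thesis using that[of "line w"] by (simp add: line_def add_eq_0_iff)
qed

lemma zariski_open_hyp_obtain_off_coordinate_hyperplanes:
  fixes W :: "(complex^'n) set"
  assumes "zariski_open_hyp W" "W \<noteq> {}"
  obtains c where "c \<in> W" "\<And>i. c $ i \<noteq> 0"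
proof -
  obtain P where P: "\<forall>p\<in>P. hom_poly p" "W = {c. c \<noteq> 0 \<and> (\<exists>p\<in>P. p c \<noteq> 0)}"
    using assms(1) unfolding zariski_open_hyp_def by blast
  obtain p c0 where "p \<in> P" "p c0 \<noteq> 0" using assms(2) P(2) by blast
  moreover obtain c where "p c \<noteq> 0" "\<And>i. c $ i \<noteq> 0"
    using hom_poly_nonzero_off_coordinate_hyperplanes P(1) calculation by blast
  moreover have "c \<noteq> 0" using calculation(4) by (metis zero_index)
  ultimately show ?thesis using that P(2) by blast
qed

lemma beta2_I0: "beta2 I0 = 4"
  unfolding beta2_def
proof (rule the_equality)
  define \<alpha> :: "3 \<Rightarrow> nat" where "\<alpha> i = (if i = 2 then 0 else 1)" for i
  define W where "W = {c :: complex^3. c \<noteq> 0 \<and> (\<exists>p\<in>{\<lambda>x. \<Prod>i\<in>UNIV. x $ i ^ \<alpha> i}. p c \<noteq> 0)}"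
  have "\<alpha> 1 = 1" "\<alpha> 2 = 0" "\<alpha> 3 = 1" by (simp_all add: \<alpha>_def)
  then have monomial: "(\<Prod>i\<in>UNIV. x $ i ^ \<alpha> i) = x$1 * x$3" for x :: "complex^3"
    unfolding UNIV_3 by (simp add: ac_simps)
  have "zariski_open_hyp W"
    unfolding zariski_open_hyp_def W_def
    by (rule exI[of _ "{\<lambda>x. \<Prod>i\<in>UNIV. x $ i ^ \<alpha> i}"]) (simp add: hom_poly_monomial)
  moreover have "vector [1, 0, 1] \<in> W"
  proof -
    have v: "(vector [1, 0, 1] :: complex^3) $ 1 = 1" "(vector [1, 0, 1] :: complex^3) $ 3 = 1" by simp_all
    then have "(vector [1, 0, 1] :: complex^3) \<noteq> 0" by (metis zero_index zero_neq_one)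
    then show ?thesis using v unfolding W_def monomial by simp
  qed
  moreover have "T1 (gen_ideal (I0 \<union> {linform c})) = 4" if "c \<in> W" for c
  proof -
    from that have "c$1 \<noteq> 0" "c$3 \<noteq> 0" unfolding W_def monomial by simp_all
    then show ?thesis using T1_I0_hyp[of c] unfolding I0_hyp_def by simp
  qed
  ultimately show "\<exists>W. zariski_open_hyp W \<and> W \<noteq> {} \<and> (\<forall>c\<in>W. T1 (gen_ideal (I0 \<union> {linform c})) = 4)"
    by blast
next
  fix \<beta> assume "\<exists>W. zariski_open_hyp W \<and> W \<noteq> {} \<and> (\<forall>c\<in>W. T1 (gen_ideal (I0 \<union> {linform c})) = \<beta>)"
  then obtain W where W: "zariski_open_hyp W" "W \<noteq> {}" "\<forall>c\<in>W. T1 (I0_hyp c) = \<beta>"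
    unfolding I0_hyp_def by blast
  obtain c where "c \<in> W" "\<And>i. c $ i \<noteq> 0"
    using zariski_open_hyp_obtain_off_coordinate_hyperplanes[OF W(1,2)] by blast
  then show "\<beta> = 4" using W(3) T1_I0_hyp[of c] by simp
qed

theorem mainTheorem2:
  fixes I :: "(complex^3 \<Rightarrow> complex) set"
  assumes "I = gen_ideal {(\<lambda>x. x$1 ^ 3 - x$3 * x$2), (\<lambda>x. x$2 ^ 2)}"
  shows "Tq 2 I = 3 \<and> beta2 I = 4 \<and>
    (\<forall>a b::complex. T1 (gen_ideal (I \<union> {\<lambda>x. a * x$1 + b * x$2 + x$3}))
        = (if a \<noteq> 0 then 4 else 3)) \<and>
    (\<forall>a b::complex. T1 (gen_ideal (I \<union> {\<lambda>x. a * x$1 + b * x$2})) = \<infinity>)"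
proof -
  have I: "I = I0" unfolding assms I0_def gen1_def gen2_def ..
  have hyperplanes: "(\<lambda>x::complex^3. a * x$1 + b * x$2 + x$3) = linform (vector [a, b, 1])"
      "(\<lambda>x::complex^3. a * x$1 + b * x$2) = linform (vector [a, b, 0])" for a b
    by (simp_all add: fun_eq_iff linform_3)
  show ?thesis
    unfolding I hyperplanes I0_hyp_def[symmetric]
    using Tq_2_I0 beta2_I0 by (simp add: T1_I0_hyp T1_I0_hyp_infinite)
qed

end
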